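(* Let $X$ and $Y$ be arbitrary (completely regular) spaces and $F\colon\mathcal{K}(X)\to\mathcal{K}(Y)$ satisfy: (1) if $K,L\in\mathcal{K}(X)$ and $K\subset L$, then $F(K)\subset F(L)$; (2) for each $L\in\mathcal{K}(Y)$ there is $K\in\mathcal{K}(X)$ with $L\subset F(K)$; (3) if $U\subset X$ and $V\subset Y$ are non-empty open sets such that for each compact $L\subset V$ there is a compact $K\subset U$ with $L\subset F(K)$, then for any open cover $\mathcal{W}$ of $U$ and any $y\in V$ there exist a finite $\mathcal{E}\subset\mathcal{W}$ and a neighborhood $V_y$ of $y$ such that for each compact $L\subset V_y$ there is a compact $K\subset\bigcup\mathcal{E}$ with $L\subset F(K)$. Then $F$ is monotone set tri-quotient.
   Context: $\mathcal{K}(X)$ is the set of compact subsets of $X$, $\mathcal{T}(X)$ the topology of $X$. $F$ is monotone if $K\subset L$ implies $F(K)\subset F(L)$; it is set tri-quotient if there is $s\colon\mathcal{T}(X)\to\mathcal{T}(Y)$ with: (str1) $s(U)\subset\bigcup\{F(K):K\in\mathcal{K}(X),K\subset U\}$; (str2) $s(X)=Y$; (str3) $U\subset V\Rightarrow s(U)\subset s(V)$; (str4) if $y\in s(U)$ and $\mathcal{W}$ is a cover of $\bigcup\{K\in F^{-1}(y):K\subset U\}$ by open subsets of $X$, then $y\in s(\bigcup\mathcal{E})$ for some finite $\mathcal{E}\subset\mathcal{W}$, where $F^{-1}(y)=\{K\in\mathcal{K}(X):y\in F(K)\}$. *)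

theory Defs
  imports "HOL-Analysis.Analysis"
begin

text \<open>A map F from the compact subsets of X to the compact subsets of Y is modelled
  by a function on sets together with the requirement that compact sets go to compact sets.\<close>

definition maps_compacts :: "'a topology \<Rightarrow> 'b topology \<Rightarrow> ('a set \<Rightarrow> 'b set) \<Rightarrow> bool" where
  "maps_compacts X Y F \<longleftrightarrow> (\<forall>K. compactin X K \<longrightarrow> compactin Y (F K))"

definition monotone_cmap :: "'a topology \<Rightarrow> ('a set \<Rightarrow> 'b set) \<Rightarrow> bool" where
  "monotone_cmap X F \<longleftrightarrow>
     (\<forall>K L. compactin X K \<and> compactin X L \<and> K \<subseteq> L \<longrightarrow> F K \<subseteq> F L)"

definition cinv :: "'a topology \<Rightarrow> ('a set \<Rightarrow> 'b set) \<Rightarrow> 'b \<Rightarrow> 'a set set" where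
  "cinv X F y = {K. compactin X K \<and> y \<in> F K}"

definition set_tri_quotient :: "'a topology \<Rightarrow> 'b topology \<Rightarrow> ('a set \<Rightarrow> 'b set) \<Rightarrow> bool" where
  "set_tri_quotient X Y F \<longleftrightarrow>
    (\<exists>s :: 'a set \<Rightarrow> 'b set.
       (\<forall>U. openin X U \<longrightarrow> openin Y (s U)) \<and>
       (\<forall>U. openin X U \<longrightarrow> s U \<subseteq> \<Union>{F K | K. compactin X K \<and> K \<subseteq> U}) \<and>
       s (topspace X) = topspace Y \<and>
       (\<forall>U V. openin X U \<and> openin X V \<and> U \<subseteq> V \<longrightarrow> s U \<subseteq> s V) \<and>
       (\<forall>U y \<W>. openin X U \<and> y \<in> s U \<and> (\<forall>W\<in>\<W>. openin X W) \<and>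
           \<Union>{K \<in> cinv X F y. K \<subseteq> U} \<subseteq> \<Union>\<W> \<longrightarrow>
           (\<exists>\<E>. finite \<E> \<and> \<E> \<subseteq> \<W> \<and> y \<in> s (\<Union>\<E>))))"

end

theory Submission
  imports Defs
begin

text \<open>The operator witnessing set tri-quotientness sends an open U to the largest open set V
  all of whose compact subsets are covered by the image of a compact subset of U. Hypothesis (3)
  is exactly the finite-subcover property (str4) for this operator, once one notices that, by
  monotonicity, the compacta K \<subseteq> U with y \<in> F K already cover all of U. Complete regularity
  and compactness of the values of F play no role.\<close>

definition lifts_compacts :: "'a topology \<Rightarrow> 'b topology \<Rightarrow> ('a set \<Rightarrow> 'b set) \<Rightarrow> 'a set \<Rightarrow> 'b set \<Rightarrow> bool"
  where "lifts_compacts X Y F U V \<longleftrightarrow>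
    (\<forall>L. compactin Y L \<and> L \<subseteq> V \<longrightarrow> (\<exists>K. compactin X K \<and> K \<subseteq> U \<and> L \<subseteq> F K))"

definition lifting_interior :: "'a topology \<Rightarrow> 'b topology \<Rightarrow> ('a set \<Rightarrow> 'b set) \<Rightarrow> 'a set \<Rightarrow> 'b set"
  where "lifting_interior X Y F U = \<Union>{V. openin Y V \<and> lifts_compacts X Y F U V}"

lemma openin_lifting_interior: "openin Y (lifting_interior X Y F U)"
  unfolding lifting_interior_def by (rule openin_Union) simp

lemma lifting_interior_mono:
  assumes "U \<subseteq> U'"
  shows "lifting_interior X Y F U \<subseteq> lifting_interior X Y F U'"
proof -
  have "lifts_compacts X Y F U' V" if "lifts_compacts X Y F U V" for V
    using that assms unfolding lifts_compacts_def by (meson order_trans)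
  then show ?thesis
    unfolding lifting_interior_def by blast
qed

lemma lifting_interior_topspace:
  assumes "\<And>L. compactin Y L \<Longrightarrow> \<exists>K. compactin X K \<and> L \<subseteq> F K"
  shows "lifting_interior X Y F (topspace X) = topspace Y"
proof
  show "lifting_interior X Y F (topspace X) \<subseteq> topspace Y"
    by (rule openin_subset[OF openin_lifting_interior])
  have "lifts_compacts X Y F (topspace X) (topspace Y)"
    unfolding lifts_compacts_def by (metis assms compactin_subset_topspace)
  then show "topspace Y \<subseteq> lifting_interior X Y F (topspace X)"
    unfolding lifting_interior_def by blast
qed

lemma lifting_interior_imp_in_image:
  assumes "y \<in> lifting_interior X Y F U"
  obtains K where "compactin X K" "K \<subseteq> U" "y \<in> F K"
proof -
  obtain V where V: "openin Y V" "lifts_compacts X Y F U V" "y \<in> V"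
    using assms unfolding lifting_interior_def by blast
  then have "compactin Y {y}" "{y} \<subseteq> V"
    using openin_subset by auto
  then show ?thesis
    using V(2) that unfolding lifts_compacts_def by blast
qed

lemma lifting_interior_subset_Union_images:
  "lifting_interior X Y F U \<subseteq> \<Union>{F K | K. compactin X K \<and> K \<subseteq> U}"
proof
  fix y assume "y \<in> lifting_interior X Y F U"
  then obtain K where "compactin X K" "K \<subseteq> U" "y \<in> F K"
    by (rule lifting_interior_imp_in_image)
  then show "y \<in> \<Union>{F K | K. compactin X K \<and> K \<subseteq> U}"
    by blast
qed

lemma subset_Union_cinv:
  assumes "monotone_cmap X F" and "U \<subseteq> topspace X"
    and "compactin X K\<^sub>0" "K\<^sub>0 \<subseteq> U" "y \<in> F K\<^sub>0"
  shows "U \<subseteq> \<Union>{K \<in> cinv X F y. K \<subseteq> U}"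
proof
  fix x assume "x \<in> U"
  then have "compactin X (K\<^sub>0 \<union> {x})"
    using assms(2) by (intro compactin_Un assms(3)) auto
  with assms have "K\<^sub>0 \<union> {x} \<in> {K \<in> cinv X F y. K \<subseteq> U}"
    using \<open>x \<in> U\<close> unfolding monotone_cmap_def cinv_def by blast
  then show "x \<in> \<Union>{K \<in> cinv X F y. K \<subseteq> U}" by blast
qed

lemma lifting_interior_finite_subcover:
  assumes mono: "monotone_cmap X F"
    and loc: "\<And>U V \<W> y. openin X U \<Longrightarrow> U \<noteq> {} \<Longrightarrow> openin Y V \<Longrightarrow> V \<noteq> {} \<Longrightarrow>
       lifts_compacts X Y F U V \<Longrightarrow> (\<forall>W\<in>\<W>. openin X W) \<Longrightarrow> U \<subseteq> \<Union>\<W> \<Longrightarrow> y \<in> V \<Longrightarrow>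
       \<exists>\<E> V'. finite \<E> \<and> \<E> \<subseteq> \<W> \<and> openin Y V' \<and> y \<in> V' \<and> lifts_compacts X Y F (\<Union>\<E>) V'"
    and U: "openin X U" and y: "y \<in> lifting_interior X Y F U"
    and \<W>: "\<forall>W\<in>\<W>. openin X W" "\<Union>{K \<in> cinv X F y. K \<subseteq> U} \<subseteq> \<Union>\<W>"
  shows "\<exists>\<E>. finite \<E> \<and> \<E> \<subseteq> \<W> \<and> y \<in> lifting_interior X Y F (\<Union>\<E>)"
proof (cases "U = {}")
  case True
  with y show ?thesis by (intro exI[of _ "{}"]) simp
next
  case False
  obtain V where V: "openin Y V" "lifts_compacts X Y F U V" "y \<in> V"
    using y unfolding lifting_interior_def by blast
  obtain K\<^sub>0 where "compactin X K\<^sub>0" "K\<^sub>0 \<subseteq> U" "y \<in> F K\<^sub>0"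
    using y by (rule lifting_interior_imp_in_image)
  then have "U \<subseteq> \<Union>\<W>"
    using subset_Union_cinv[OF mono openin_subset[OF U]] \<W>(2) by (meson order_trans)
  moreover have "V \<noteq> {}"
    using V(3) by blast
  ultimately obtain \<E> V'
    where "finite \<E>" "\<E> \<subseteq> \<W>" "openin Y V'" "y \<in> V'" "lifts_compacts X Y F (\<Union>\<E>) V'"
    using loc[OF U False V(1) _ V(2) \<W>(1) _ V(3)] by blast
  then show ?thesis
    unfolding lifting_interior_def by blast
qed

theorem lemma4p1:
  fixes X :: "'a topology" and Y :: "'b topology" and F :: "'a set \<Rightarrow> 'b set"
  assumes "completely_regular_space X" and "completely_regular_space Y"
    and "maps_compacts X Y F"
    and mono: "\<And>K L. compactin X K \<Longrightarrow> compactin X L \<Longrightarrow> K \<subseteq> L \<Longrightarrow> F K \<subseteq> F L"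
    and cov: "\<And>L. compactin Y L \<Longrightarrow> \<exists>K. compactin X K \<and> L \<subseteq> F K"
    and loc: "\<And>U V \<W> y. openin X U \<Longrightarrow> U \<noteq> {} \<Longrightarrow> openin Y V \<Longrightarrow> V \<noteq> {} \<Longrightarrow>
       (\<forall>L. compactin Y L \<and> L \<subseteq> V \<longrightarrow> (\<exists>K. compactin X K \<and> K \<subseteq> U \<and> L \<subseteq> F K)) \<Longrightarrow>
       (\<forall>W\<in>\<W>. openin X W) \<Longrightarrow> U \<subseteq> \<Union>\<W> \<Longrightarrow> y \<in> V \<Longrightarrow>
       \<exists>\<E> Vy. finite \<E> \<and> \<E> \<subseteq> \<W> \<and> openin Y Vy \<and> y \<in> Vy \<and>
         (\<forall>L. compactin Y L \<and> L \<subseteq> Vy \<longrightarrow> (\<exists>K. compactin X K \<and> K \<subseteq> \<Union>\<E> \<and> L \<subseteq> F K))"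
  shows "monotone_cmap X F \<and> set_tri_quotient X Y F"
proof
  show mono_F: "monotone_cmap X F"
    using mono unfolding monotone_cmap_def by blast
  have loc': "\<exists>\<E> V'. finite \<E> \<and> \<E> \<subseteq> \<W> \<and> openin Y V' \<and> y \<in> V' \<and> lifts_compacts X Y F (\<Union>\<E>) V'"
    if "openin X U" "U \<noteq> {}" "openin Y V" "V \<noteq> {}" "lifts_compacts X Y F U V"
      "\<forall>W\<in>\<W>. openin X W" "U \<subseteq> \<Union>\<W>" "y \<in> V" for U V \<W> y
    using loc[OF that(1-4) that(5)[unfolded lifts_compacts_def] that(6-8)]
    unfolding lifts_compacts_def .
  show "set_tri_quotient X Y F"
    unfolding set_tri_quotient_def
  proof (intro exI[of _ "lifting_interior X Y F"] conjI allI impI)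
    fix U V y \<W>
    show "openin Y (lifting_interior X Y F U)"
      by (rule openin_lifting_interior)
    show "lifting_interior X Y F U \<subseteq> \<Union>{F K | K. compactin X K \<and> K \<subseteq> U}"
      by (rule lifting_interior_subset_Union_images)
    show "lifting_interior X Y F (topspace X) = topspace Y"
      using cov by (rule lifting_interior_topspace)
    show "lifting_interior X Y F U \<subseteq> lifting_interior X Y F V"
      if "openin X U \<and> openin X V \<and> U \<subseteq> V"
      using that by (simp add: lifting_interior_mono)
    show "\<exists>\<E>. finite \<E> \<and> \<E> \<subseteq> \<W> \<and> y \<in> lifting_interior X Y F (\<Union>\<E>)"
      if "openin X U \<and> y \<in> lifting_interior X Y F U \<and> (\<forall>W\<in>\<W>. openin X W) \<and>
        \<Union>{K \<in> cinv X F y. K \<subseteq> U} \<subseteq> \<Union>\<W>"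
      using that by (elim conjE) (rule lifting_interior_finite_subcover[OF mono_F loc'])
  qed
qed

end
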